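(* Let $n>p\ge 1$, let $X\in\mathbb{R}^{n\times p}$ have rows $x_1^T,\dots,x_n^T$, let $Y=(y_1,\dots,y_n)^T\in\mathbb{R}^n$, and let $h$ be an integer with $p\le h<n$. Assume: (A1) $x_i\neq \pm x_j$ for all $i\neq j$, and $x_i\neq 0$ for all $i$; (A2) $r^2_{(h)}(\beta)>0$ for every $\beta\in\mathbb{R}^p$; (A3) for every $(\circ_1,\dots,\circ_{n-1})\in\{+,-\}^{n-1}$ the $(n-1)\times p$ matrix with rows $(x_1\circ_1 x_2)^T,\dots,(x_1\circ_{n-1}x_n)^T$ has rank $p$; (A4) $X$ has $h$-full rank, i.e. $X^T\mathrm{diag}(w)X$ is invertible for every $w\in Q^{(n,h)}$. Then the Borders Scanning Algorithm (BSA) described in the context terminates and its output $\hat\beta$ is a global minimizer of $OF(\beta)=\sum_{i=1}^h r^2_{(i)}(\beta)$ over $\beta\in\mathbb{R}^p$, i.e. $\hat\beta$ is the LTS estimate.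
   Context: For $\beta\in\mathbb{R}^p$, $r_i(\beta)=y_i-x_i^T\beta$ and $r^2_{(1)}(\beta)\le\dots\le r^2_{(n)}(\beta)$ are the squared residuals $r_1^2(\beta),\dots,r_n^2(\beta)$ sorted increasingly. $Q^{(n,h)}=\{w\in\{0,1\}^n: w^1+\dots+w^n=h\}$. For $w\in Q^{(n,h)}$, $W=\mathrm{diag}(w)$ and $J(w)=\|W(Y-X(X^TWX)^{-1}X^TWY)\|^2$. A pair $(\beta,w)\in\mathbb{R}^p\times Q^{(n,h)}$ is said to be in relation $Z$ if $\sum_{i=1}^h r^2_{(i)}(\beta)=\sum_{i=1}^n w^i r_i^2(\beta)$. For $a,b\in\mathbb{R}^k$ and $\circ\in\{+,-\}$, $a\circ b$ denotes $a+b$ or $a-b$. BSA: set $J_{\min}=+\infty$. For every $(p+1)$-element subset of $\{1,\dots,n\}$, with its elements listed (in a fixed order) as $i_1,\dots,i_{p+1}$, and for every $(\circ_1,\dots,\circ_p)\in\{+,-\}^p$: if the $p\times p$ linear system $(x_{i_1}\circ_j x_{i_{j+1}})^T\beta=y_{i_1}\circ_j y_{i_{j+1}}$, $j=1,\dots,p$, is regular, let $\beta_0$ be its unique solution; compute and sort the squared residuals at $\beta_0$; if $r^2_{i_1}(\beta_0)=r^2_{(h)}(\beta_0)=r^2_{(h+1)}(\beta_0)$, determine all $w\in Q^{(n,h)}$ with $(\beta_0,w)\in Z$, and for each such $w$, if $J(w)<J_{\min}$, set $J_{\min}=J(w)$ and $w_{\min}=w$. (Non-regular systems are skipped.) After all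 subsets and sign vectors are processed, output $\hat\beta=(X^TW_{\min}X)^{-1}X^TW_{\min}Y$ with $W_{\min}=\mathrm{diag}(w_{\min})$. *)

theory Defs
  imports "HOL-Analysis.Analysis" "HOL-Library.Multiset"
begin

text \<open>Observations are indexed by a finite linearly ordered type 'n (the linear order is the
  "fixed order" used to list subsets), coordinates by a finite type 'p.\<close>

definition resid :: "real^'p^'n \<Rightarrow> real^'n \<Rightarrow> real^'p \<Rightarrow> 'n \<Rightarrow> real" where
  "resid X Y \<beta> i = Y$i - (X$i) \<bullet> \<beta>"

text \<open>Squared residuals sorted increasingly: element k-1 of this list is r^2_(k).\<close>
definition sorted_sq_resid :: "real^'p^'n::finite \<Rightarrow> real^'n \<Rightarrow> real^'p \<Rightarrow> real list" where
  "sorted_sq_resid X Y \<beta> =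
     sorted_list_of_multiset (image_mset (\<lambda>i. (resid X Y \<beta> i)^2) (mset_set (UNIV :: 'n set)))"

definition ord_sq_resid :: "real^'p^'n::finite \<Rightarrow> real^'n \<Rightarrow> real^'p \<Rightarrow> nat \<Rightarrow> real" where
  "ord_sq_resid X Y \<beta> k = sorted_sq_resid X Y \<beta> ! (k - 1)"

definition OF :: "nat \<Rightarrow> real^'p^'n::finite \<Rightarrow> real^'n \<Rightarrow> real^'p \<Rightarrow> real" where
  "OF h X Y \<beta> = (\<Sum>k=1..h. ord_sq_resid X Y \<beta> k)"

definition Qnh :: "nat \<Rightarrow> (real^'n::finite) set" where
  "Qnh h = {w. (\<forall>i. w$i \<in> {0,1}) \<and> (\<Sum>i\<in>UNIV. w$i) = real h}"

definition diagm :: "real^'n \<Rightarrow> real^'n^'n" where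
  "diagm w = (\<chi> i j. if i = j then w$i else 0)"

definition beta_w :: "real^'p^'n \<Rightarrow> real^'n \<Rightarrow> real^'n \<Rightarrow> real^'p" where
  "beta_w X Y w = matrix_inv (transpose X ** diagm w ** X) *v (transpose X *v (diagm w *v Y))"

definition Jw :: "real^'p^'n \<Rightarrow> real^'n \<Rightarrow> real^'n \<Rightarrow> real" where
  "Jw X Y w = (norm (diagm w *v (Y - X *v beta_w X Y w)))^2"

definition relZ :: "nat \<Rightarrow> real^'p^'n::finite \<Rightarrow> real^'n \<Rightarrow> real^'p \<Rightarrow> real^'n \<Rightarrow> bool" where
  "relZ h X Y \<beta> w \<longleftrightarrow> OF h X Y \<beta> = (\<Sum>i\<in>UNIV. w$i * (resid X Y \<beta> i)^2)"

definition sgnb :: "bool \<Rightarrow> real" where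
  "sgnb b = (if b then 1 else -1)"

text \<open>The set of all w examined (and compared via J) by BSA.  For a (p+1)-subset S listed
  increasingly, i_1 = Min S; the remaining p elements i_2..i_{p+1} are enumerated by a
  bijection e from the row index type 'p onto S - {i_1} (the order of these rows is
  irrelevant: permuting rows together with their signs changes neither regularity nor the
  solution).\<close>
definition BSA_candidates :: "nat \<Rightarrow> real^'p^('n::{finite,linorder}) \<Rightarrow> real^('n::{finite,linorder}) \<Rightarrow> (real^('n::{finite,linorder})) set" where
  "BSA_candidates h X Y = {w \<in> Qnh h. \<exists>S e s.
      S \<subseteq> UNIV \<and> card S = CARD('p) + 1 \<and>
      bij_betw e (UNIV :: 'p set) (S - {Min S}) \<and>
      (let A = (\<chi> j. X$(Min S) + sgnb (s j) *\<^sub>R X$(e j)) :: real^'p^'p;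
           b = (\<chi> j. Y$(Min S) + sgnb (s j) * Y$(e j)) :: real^'p;
           \<beta>0 = matrix_inv A *v b
       in invertible A \<and>
          (resid X Y \<beta>0 (Min S))^2 = ord_sq_resid X Y \<beta>0 h \<and>
          ord_sq_resid X Y \<beta>0 h = ord_sq_resid X Y \<beta>0 (h + 1) \<and>
          relZ h X Y \<beta>0 w)}"

end

theory Submission
  imports Defs
begin

text \<open>For every h-subset the trimmed sum OF is at most the sum of the squared residuals over
  that subset, with equality for the h smallest ones, and J(w) is the least residual sum over the
  support of w. Hence min OF = min J, and a J-minimal candidate of BSA is an LTS estimate as soon
  as some global minimiser of J over Q(n,h) is itself a candidate.

  To see that it is, let A be its support, optimal at its fit. Moving along a segment and stopping
  at the first tie between an index inside and one outside A reaches a border point; among all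
  border points take one whose level set G (the indices attaining r^2_(h)) is largest. The
  vectors x_m + x_k or x_m - x_k for k in G, signs matching the residuals, span the whole space:
  otherwise moving orthogonally to them keeps G tied and, X having full rank, ties a further
  index first, unless all residuals vanish together, which (A2) forbids. Any p independent ones
  among them form a regular BSA system solved by the border point.\<close>

section \<open>Lowest sets and order statistics\<close>

definition sorted_values :: "('a::finite \<Rightarrow> real) \<Rightarrow> real list" where
  "sorted_values f = sorted_list_of_multiset (image_mset f (mset_set UNIV))"

definition lowest_set :: "('a::finite \<Rightarrow> real) \<Rightarrow> nat \<Rightarrow> 'a set \<Rightarrow> bool" where
  "lowest_set f h A \<longleftrightarrow> card A = h \<and> (\<forall>a\<in>A. \<forall>b. b \<notin> A \<longrightarrow> f a \<le> f b)"

lemma lowest_set_sorted_values: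
  fixes f :: "'a::finite \<Rightarrow> real"
  assumes "lowest_set f h A"
  obtains xs ys where "set xs = A" "set ys = - A" "length xs = h"
    "sorted (map f (xs @ ys))" "sorted_values f = map f (xs @ ys)"
proof -
  obtain xs0 where xs0: "set xs0 = A" "distinct xs0"
    using finite_distinct_list[of A] by auto
  obtain ys0 where ys0: "set ys0 = - A" "distinct ys0"
    using finite_distinct_list[of "- A"] by auto
  define xs where "xs = sort_key f xs0"
  define ys where "ys = sort_key f ys0"
  have sets: "set xs = A" "set ys = - A" and dist: "distinct (xs @ ys)"
    using xs0 ys0 unfolding xs_def ys_def by auto
  have "\<forall>x\<in>set xs. \<forall>y\<in>set ys. f x \<le> f y"
    using assms sets unfolding lowest_set_def by auto
  moreover have "sorted (map f xs)" "sorted (map f ys)"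
    unfolding xs_def ys_def by simp_all
  ultimately have sorted: "sorted (map f (xs @ ys))"
    by (simp add: sorted_append)
  have "set (xs @ ys) = UNIV" using sets by auto
  then have "mset_set UNIV = mset (xs @ ys)"
    using mset_set_set[OF dist] by simp
  then have "image_mset f (mset_set UNIV) = mset (map f (xs @ ys))"
    by (simp only: mset_map)
  then have "sorted_values f = map f (xs @ ys)"
    unfolding sorted_values_def using sorted
    by (simp only: sorted_list_of_multiset_mset sorted_sort_id)
  moreover have "length xs = h"
    using assms dist sets distinct_card[of xs] unfolding lowest_set_def by simp
  ultimately show thesis using that sets sorted by blast
qed

lemma lowest_set_sorted_values_bounds:
  fixes f :: "'a::finite \<Rightarrow> real"
  assumes "lowest_set f h A" and "a \<in> A" and "b \<notin> A"
  shows "f a \<le> sorted_values f ! (h - 1)" "sorted_values f ! (h - 1) \<le> f b"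
    and "f a \<le> sorted_values f ! h" "sorted_values f ! h \<le> f b"
proof -
  obtain xs ys where sets: "set xs = A" "set ys = - A" and len: "length xs = h"
    and sorted: "sorted (map f (xs @ ys))" and sv: "sorted_values f = map f (xs @ ys)"
    using lowest_set_sorted_values[OF assms(1)] .
  have "a \<in> set xs" "b \<in> set ys" using assms(2,3) sets by simp_all
  then obtain i j where i: "i < length xs" "xs ! i = a" and j: "j < length ys" "ys ! j = b"
    by (auto simp: in_set_conv_nth)
  have lens: "h - 1 < length xs" "0 < length ys" using i(1) j(1) len by linarith+
  then have last_in: "xs ! (h - 1) \<in> A" and first_out: "ys ! 0 \<notin> A"
    using nth_mem sets by blast+
  have at_h_1: "sorted_values f ! (h - 1) = f (xs ! (h - 1))"
    and at_h: "sorted_values f ! h = f (ys ! 0)"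
    using lens len unfolding sv by (simp_all add: nth_append)
  have "map f (xs @ ys) ! i \<le> map f (xs @ ys) ! (h - 1)"
    using sorted i j len by (intro sorted_nth_mono) auto
  then show "f a \<le> sorted_values f ! (h - 1)"
    using i len unfolding sv by (simp add: nth_append)
  have "map f (xs @ ys) ! h \<le> map f (xs @ ys) ! (h + j)"
    using sorted i j len by (intro sorted_nth_mono) auto
  then show "sorted_values f ! h \<le> f b"
    using j len unfolding sv by (simp add: nth_append)
  show "sorted_values f ! (h - 1) \<le> f b" "f a \<le> sorted_values f ! h"
    using assms last_in first_out unfolding at_h_1 at_h lowest_set_def by blast+
qed

lemma lowest_set_sum_sorted_values:
  fixes f :: "'a::finite \<Rightarrow> real"
  assumes "lowest_set f h A"
  shows "(\<Sum>k<h. sorted_values f ! k) = sum f A"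
proof -
  obtain xs ys where sets: "set xs = A" "set ys = - A" and len: "length xs = h"
    and sv: "sorted_values f = map f (xs @ ys)"
    using lowest_set_sorted_values[OF assms] .
  have "distinct xs"
    using assms sets len unfolding lowest_set_def by (metis card_distinct)
  have "(\<Sum>k<h. sorted_values f ! k) = (\<Sum>k<h. f (xs ! k))"
    unfolding sv using len by (intro sum.cong) (auto simp: nth_append)
  also have "\<dots> = sum_list (map f xs)"
    using len by (simp add: sum_list_sum_nth atLeast0LessThan)
  also have "\<dots> = sum f A"
    using \<open>distinct xs\<close> sets by (simp add: sum_list_distinct_conv_sum_set)
  finally show ?thesis .
qed

lemma sum_le_sum_if_card_eq:
  fixes f :: "'a \<Rightarrow> real"
  assumes "finite P" "finite Q" "card P = card Q" "\<And>a b. a \<in> P \<Longrightarrow> b \<in> Q \<Longrightarrow> f a \<le> f b"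
  shows "sum f P \<le> sum f Q"
proof (cases "P = {}")
  case True
  then show ?thesis using assms by simp
next
  case False
  define c where "c = Max (f ` P)"
  have "c \<in> f ` P" unfolding c_def using assms(1) False by (intro Max_in) auto
  then have "\<forall>b\<in>Q. c \<le> f b" using assms(4) by blast
  then have "of_nat (card Q) * c \<le> sum f Q" by (intro sum_bounded_below) blast
  moreover have "\<forall>a\<in>P. f a \<le> c" unfolding c_def using assms(1) by simp
  then have "sum f P \<le> of_nat (card P) * c" by (intro sum_bounded_above) blast
  ultimately show ?thesis using assms(3) by simp
qed

lemma lowest_set_sum_le:
  fixes f :: "'a::finite \<Rightarrow> real"
  assumes "lowest_set f h A" and "card T = h"
  shows "sum f A \<le> sum f T"
proof -
  have "card (A - T) = card A - card (A \<inter> T)"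
    by (simp add: card_Diff_subset_Int)
  moreover have "card (T - A) = card T - card (A \<inter> T)"
    by (simp add: card_Diff_subset_Int Int_commute)
  moreover have "\<And>a b. a \<in> A - T \<Longrightarrow> b \<in> T - A \<Longrightarrow> f a \<le> f b"
    using assms(1) unfolding lowest_set_def by blast
  ultimately have "sum f (A - T) \<le> sum f (T - A)"
    using assms unfolding lowest_set_def by (intro sum_le_sum_if_card_eq) auto
  moreover have "sum f A = sum f (A \<inter> T) + sum f (A - T)"
    by (simp add: sum.Int_Diff)
  moreover have "sum f T = sum f (A \<inter> T) + sum f (T - A)"
    using sum.Int_Diff[of T f A] by (simp add: Int_commute)
  ultimately show ?thesis by simp
qed

lemma lowest_setI_sum_minimal:
  fixes f :: "'a::finite \<Rightarrow> real"
  assumes "card A = h" and minimal: "\<And>T. card T = h \<Longrightarrow> sum f A \<le> sum f T"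
  shows "lowest_set f h A"
  unfolding lowest_set_def
proof (intro conjI assms(1) ballI allI impI)
  fix a b assume a: "a \<in> A" and b: "b \<notin> A"
  show "f a \<le> f b"
  proof (rule ccontr)
    assume "\<not> f a \<le> f b"
    define T where "T = insert b (A - {a})"
    have "card T = h"
      unfolding T_def using a b assms(1) card_gt_0_iff[of A] by (auto simp: card_Diff_singleton)
    have "sum f T = f b + sum f (A - {a})" unfolding T_def using b by simp
    also have "\<dots> = f b + sum f A - f a" using a by (simp add: sum_diff1)
    finally have "sum f T < sum f A" using \<open>\<not> f a \<le> f b\<close> by simp
    then show False using minimal[OF \<open>card T = h\<close>] by simp
  qed
qed

lemma card_le_card_UNIV: "card (A :: 'a::finite set) \<le> CARD('a)"
  by (rule card_mono) auto

lemma lowest_set_exists: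
  fixes f :: "'a::finite \<Rightarrow> real"
  assumes "h \<le> CARD('a)"
  obtains A where "lowest_set f h A"
proof -
  obtain A0 :: "'a set" where "card A0 = h"
    using obtain_subset_with_card_n[OF assms] by blast
  then have "{A :: 'a set. card A = h} \<noteq> {}" by blast
  then obtain A where "is_arg_min (sum f) (\<lambda>A. A \<in> {A. card A = h}) A"
    using ex_is_arg_min_if_finite[of "{A :: 'a set. card A = h}" "sum f"] by auto
  then have "card A = h" "\<And>T. card T = h \<Longrightarrow> sum f A \<le> sum f T"
    unfolding is_arg_min_linorder by auto
  then have "lowest_set f h A" by (rule lowest_setI_sum_minimal)
  then show thesis by (rule that)
qed

definition sq_resid :: "real^'p^'n \<Rightarrow> real^'n \<Rightarrow> real^'p \<Rightarrow> 'n \<Rightarrow> real" where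
  "sq_resid X Y \<beta> i = (resid X Y \<beta> i)^2"

lemma ord_sq_resid_eq_sorted_values:
  "ord_sq_resid X Y \<beta> k = sorted_values (sq_resid X Y \<beta>) ! (k - 1)"
  unfolding ord_sq_resid_def sorted_sq_resid_def sorted_values_def sq_resid_def by simp

lemma OF_lowest_set:
  assumes "lowest_set (sq_resid X Y \<beta>) h A"
  shows "OF h X Y \<beta> = sum (sq_resid X Y \<beta>) A"
proof -
  have "OF h X Y \<beta> = (\<Sum>k<h. sorted_values (sq_resid X Y \<beta>) ! k)"
    unfolding OF_def ord_sq_resid_eq_sorted_values
    by (rule sum.reindex_bij_witness[where i = Suc and j = "\<lambda>k. k - 1"]) auto
  then show ?thesis using lowest_set_sum_sorted_values[OF assms] by simp
qed

lemma resid_along_line: "resid X Y (\<beta> + t *\<^sub>R d) i = resid X Y \<beta> i - t * (X$i \<bullet> d)"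
  unfolding resid_def by (simp add: inner_add_right)

lemma continuous_sq_resid_along_line:
  "continuous_on UNIV (\<lambda>t::real. sq_resid X Y (\<beta> + t *\<^sub>R d) k)"
  unfolding sq_resid_def resid_def by (intro continuous_intros)

section \<open>Weighted least squares\<close>

definition indicator_vec :: "'a set \<Rightarrow> real^'a" where
  "indicator_vec A = (\<chi> i. if i \<in> A then 1 else 0)"

lemma indicator_vec_nth [simp]: "(indicator_vec A)$i = (if i \<in> A then 1 else 0)"
  unfolding indicator_vec_def by simp

lemma Qnh_eq_indicator_vecs: "Qnh h = indicator_vec ` {A :: 'n::finite set. card A = h}"
proof (intro set_eqI iffI)
  fix w :: "real^'n" assume w: "w \<in> Qnh h"
  have "w = indicator_vec {i. w$i = 1}"
    using w unfolding Qnh_def indicator_vec_def by (auto simp: vec_eq_iff)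
  moreover have "real (card {i. w$i = 1}) = real h"
    using w unfolding Qnh_def
    by (subst (asm) \<open>w = indicator_vec {i. w$i = 1}\<close>) (simp add: indicator_vec_def sum.If_cases)
  ultimately show "w \<in> indicator_vec ` {A. card A = h}" by auto
next
  fix w :: "real^'n" assume "w \<in> indicator_vec ` {A. card A = h}"
  then show "w \<in> Qnh h"
    unfolding Qnh_def indicator_vec_def by (auto simp: sum.If_cases)
qed

definition weighted_rss :: "real^'p^'n::finite \<Rightarrow> real^'n \<Rightarrow> real^'n \<Rightarrow> real^'p \<Rightarrow> real" where
  "weighted_rss X Y w \<beta> = (\<Sum>i\<in>UNIV. w$i * (resid X Y \<beta> i)^2)"

lemma weighted_rss_indicator_vec:
  "weighted_rss X Y (indicator_vec A) \<beta> = sum (sq_resid X Y \<beta>) A"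
proof -
  have "\<And>i. (indicator_vec A)$i * (resid X Y \<beta> i)^2 = (if i \<in> A then sq_resid X Y \<beta> i else 0)"
    unfolding indicator_vec_def sq_resid_def by simp
  then show ?thesis unfolding weighted_rss_def by (simp add: sum.If_cases)
qed

lemma diagm_mult_vec_nth: "(diagm w *v v)$i = w$i * v$i"
proof -
  have "(diagm w *v v)$i = (\<Sum>j\<in>UNIV. (if i = j then w$i else 0) * v$j)"
    unfolding diagm_def matrix_vector_mult_def by simp
  also have "\<dots> = (\<Sum>j\<in>UNIV. if j = i then w$i * v$j else 0)"
    by (rule sum.cong) auto
  finally show ?thesis by simp
qed

lemma matrix_inv_mult_right:
  fixes M :: "'a::semiring_1^'n^'n"
  assumes "invertible M" shows "M ** matrix_inv M = mat 1"
  using assms unfolding invertible_def matrix_inv_def by (rule someI2_ex) blast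

lemma matrix_inv_mult_left:
  fixes M :: "'a::semiring_1^'n^'n"
  assumes "invertible M" shows "matrix_inv M ** M = mat 1"
  using assms unfolding invertible_def matrix_inv_def by (rule someI2_ex) blast

lemma inner_transpose_mult_vec:
  "(transpose X *v z) \<bullet> d = (\<Sum>i\<in>UNIV. z$i * (X$i \<bullet> d))"
proof -
  have "(transpose X *v z) \<bullet> d = (\<Sum>k\<in>UNIV. (\<Sum>i\<in>UNIV. X$i$k * z$i) * d$k)"
    unfolding inner_vec_def matrix_vector_mult_def transpose_def by simp
  also have "\<dots> = (\<Sum>k\<in>UNIV. \<Sum>i\<in>UNIV. z$i * (X$i$k * d$k))"
    by (simp add: sum_distrib_right sum_distrib_left algebra_simps)
  also have "\<dots> = (\<Sum>i\<in>UNIV. z$i * (X$i \<bullet> d))"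
    by (subst sum.swap) (simp add: inner_vec_def sum_distrib_left)
  finally show ?thesis .
qed

text \<open>The normal equations make the weighted residuals orthogonal to every fitted direction,
  so the weighted residual sum splits as at the fit plus a nonnegative term.\<close>
lemma weighted_rss_beta_w_le:
  fixes X :: "real^'p^'n::finite"
  assumes "invertible (transpose X ** diagm w ** X)" and "\<And>i. 0 \<le> w$i"
  shows "weighted_rss X Y w (beta_w X Y w) \<le> weighted_rss X Y w \<beta>"
proof -
  let ?M = "transpose X ** diagm w ** X"
  define b0 where "b0 = beta_w X Y w"
  define d where "d = \<beta> - b0"
  have "?M *v b0 = (?M ** matrix_inv ?M) *v (transpose X *v (diagm w *v Y))"
    unfolding b0_def beta_w_def by (rule matrix_vector_mul_assoc)
  also have "\<dots> = transpose X *v (diagm w *v Y)"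
    using matrix_inv_mult_right[OF assms(1)] by simp
  finally have "(transpose X *v (diagm w *v (X *v b0))) \<bullet> d = (transpose X *v (diagm w *v Y)) \<bullet> d"
    by (simp add: matrix_vector_mul_assoc matrix_mul_assoc)
  then have "(\<Sum>i\<in>UNIV. w$i * (X$i \<bullet> b0) * (X$i \<bullet> d)) = (\<Sum>i\<in>UNIV. w$i * Y$i * (X$i \<bullet> d))"
    unfolding inner_transpose_mult_vec diagm_mult_vec_nth by (simp add: matrix_vector_mul_component)
  then have orth: "(\<Sum>i\<in>UNIV. w$i * resid X Y b0 i * (X$i \<bullet> d)) = 0"
    unfolding resid_def by (simp add: algebra_simps sum_subtractf)
  have shift: "resid X Y \<beta> i = resid X Y b0 i - X$i \<bullet> d" for i
    unfolding resid_def d_def by (simp add: inner_diff_right)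
  have "weighted_rss X Y w \<beta> = (\<Sum>i\<in>UNIV. w$i * (resid X Y b0 i)^2)
      - 2 * (\<Sum>i\<in>UNIV. w$i * resid X Y b0 i * (X$i \<bullet> d)) + (\<Sum>i\<in>UNIV. w$i * (X$i \<bullet> d)^2)"
    unfolding weighted_rss_def shift
    by (simp add: power2_diff algebra_simps sum.distrib sum_subtractf sum_distrib_left)
  also have "\<dots> = weighted_rss X Y w b0 + (\<Sum>i\<in>UNIV. w$i * (X$i \<bullet> d)^2)"
    using orth unfolding weighted_rss_def by simp
  also have "\<dots> \<ge> weighted_rss X Y w b0"
    using assms(2) by (simp add: sum_nonneg)
  finally show ?thesis unfolding b0_def .
qed

lemma Jw_eq_weighted_rss:
  fixes X :: "real^'p^'n::finite"
  assumes "\<And>i. w$i \<in> {0, 1}"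
  shows "Jw X Y w = weighted_rss X Y w (beta_w X Y w)"
proof -
  have idem: "w$i * w$i = w$i" for i using assms[of i] by auto
  have "Jw X Y w = (\<Sum>i\<in>UNIV. ((diagm w *v (Y - X *v beta_w X Y w))$i)^2)"
    unfolding Jw_def by (simp add: norm_vec_def L2_set_def real_sqrt_pow2 sum_nonneg)
  also have "\<dots> = (\<Sum>i\<in>UNIV. (w$i * w$i) * (resid X Y (beta_w X Y w) i)^2)"
    unfolding diagm_mult_vec_nth resid_def
    by (simp add: matrix_vector_mul_component power_mult_distrib power2_eq_square algebra_simps)
  finally show ?thesis unfolding weighted_rss_def idem .
qed

lemma OF_le_weighted_rss:
  fixes X :: "real^'p^'n::finite"
  assumes "w \<in> Qnh h"
  shows "OF h X Y \<beta> \<le> weighted_rss X Y w \<beta>"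
proof -
  obtain T where T: "card T = h" "w = indicator_vec T"
    using assms unfolding Qnh_eq_indicator_vecs by auto
  then have "h \<le> CARD('n)" using card_le_card_UNIV[of T] by simp
  then obtain A where A: "lowest_set (sq_resid X Y \<beta>) h A"
    using lowest_set_exists by blast
  then show ?thesis
    using lowest_set_sum_le[OF A T(1)] OF_lowest_set[OF A] T(2) by (simp add: weighted_rss_indicator_vec)
qed

lemma Jw_le_OF:
  fixes X :: "real^'p^'n::finite"
  assumes "h \<le> CARD('n)" and h_full_rank: "\<forall>w \<in> Qnh h. invertible (transpose X ** diagm w ** X)"
  obtains w where "w \<in> Qnh h" "Jw X Y w \<le> OF h X Y \<beta>"
proof -
  obtain A where A: "lowest_set (sq_resid X Y \<beta>) h A"
    using lowest_set_exists[OF assms(1)] by blast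
  define w where "w = indicator_vec A"
  have w: "w \<in> Qnh h"
    using A unfolding w_def Qnh_eq_indicator_vecs lowest_set_def by simp
  have "Jw X Y w = weighted_rss X Y w (beta_w X Y w)"
    unfolding w_def by (rule Jw_eq_weighted_rss) simp
  also have "\<dots> \<le> weighted_rss X Y w \<beta>"
    using h_full_rank w unfolding w_def by (intro weighted_rss_beta_w_le) auto
  also have "\<dots> = OF h X Y \<beta>"
    using OF_lowest_set[OF A] by (simp add: w_def weighted_rss_indicator_vec)
  finally show thesis using that w by blast
qed

lemma Jw_minimizer_exists:
  fixes X :: "real^'p^'n::finite"
  assumes "h \<le> CARD('n)"
  obtains w where "w \<in> Qnh h" "\<And>w'. w' \<in> Qnh h \<Longrightarrow> Jw X Y w \<le> Jw X Y w'"
proof -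
  obtain A :: "'n set" where "card A = h"
    using obtain_subset_with_card_n[OF assms] by blast
  then have "finite (Qnh h :: (real^'n) set)" "Qnh h \<noteq> ({} :: (real^'n) set)"
    unfolding Qnh_eq_indicator_vecs by auto
  then show thesis
    using that ex_is_arg_min_if_finite[of "Qnh h" "Jw X Y"] unfolding is_arg_min_linorder by blast
qed

lemma lowest_set_at_Jw_minimizer:
  fixes X :: "real^'p^'n::finite"
  assumes h_full_rank: "\<forall>w \<in> Qnh h. invertible (transpose X ** diagm w ** X)"
    and A: "card A = h"
    and minimal: "\<And>w'. w' \<in> Qnh h \<Longrightarrow> Jw X Y (indicator_vec A) \<le> Jw X Y w'"
  shows "lowest_set (sq_resid X Y (beta_w X Y (indicator_vec A))) h A"
proof (rule lowest_setI_sum_minimal[OF A])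
  fix T :: "'n set" assume T: "card T = h"
  let ?b = "beta_w X Y (indicator_vec A)"
  have "h \<le> CARD('n)" using A card_le_card_UNIV[of A] by simp
  then obtain w where w: "w \<in> Qnh h" "Jw X Y w \<le> OF h X Y ?b"
    using Jw_le_OF h_full_rank by blast
  have "sum (sq_resid X Y ?b) A = Jw X Y (indicator_vec A)"
    by (simp add: Jw_eq_weighted_rss weighted_rss_indicator_vec)
  also have "\<dots> \<le> OF h X Y ?b" using minimal w by (meson order_trans)
  also have "\<dots> \<le> weighted_rss X Y (indicator_vec T) ?b"
    using T by (intro OF_le_weighted_rss) (auto simp: Qnh_eq_indicator_vecs)
  finally show "sum (sq_resid X Y ?b) A \<le> sum (sq_resid X Y ?b) T"
    by (simp add: weighted_rss_indicator_vec)
qed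

lemma first_zero_of_continuous_family:
  fixes g :: "'k \<Rightarrow> real \<Rightarrow> real"
  assumes "finite K" and cont: "\<And>k. k \<in> K \<Longrightarrow> continuous_on UNIV (g k)"
    and pos: "\<And>k. k \<in> K \<Longrightarrow> g k 0 > 0" and "k0 \<in> K" "t0 > 0" "g k0 t0 \<le> 0"
  shows "\<exists>t1>0. (\<forall>k\<in>K. g k t1 \<ge> 0) \<and> (\<exists>k\<in>K. g k t1 = 0)"
proof -
  define Z where "Z = {0..} \<inter> (\<Union>k\<in>K. {t. g k t \<le> 0})"
  have "closed Z"
    unfolding Z_def using \<open>finite K\<close> cont
    by (intro closed_Int closed_UN ballI closed_Collect_le) (auto intro: continuous_intros)
  moreover have "t0 \<in> Z" and bdd: "bdd_below Z"
    using assms unfolding Z_def by (auto intro: bdd_belowI[of _ 0])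
  ultimately have t1Z: "Inf Z \<in> Z"
    using closed_contains_Inf by blast
  define t1 where "t1 = Inf Z"
  have "t1 \<noteq> 0"
  proof
    assume "t1 = 0"
    then obtain k where "k \<in> K" "g k 0 \<le> 0" using t1Z unfolding t1_def Z_def by auto
    then show False using pos[of k] by simp
  qed
  then have t1_pos: "t1 > 0" using t1Z unfolding t1_def Z_def by simp
  have nonneg: "g k t1 \<ge> 0" if k: "k \<in> K" for k
  proof (rule ccontr)
    assume neg: "\<not> g k t1 \<ge> 0"
    have "continuous_on {0..t1} (\<lambda>t. - g k t)"
      using cont k by (auto intro!: continuous_intros intro: continuous_on_subset)
    then obtain t where t: "0 \<le> t" "t \<le> t1" "- g k t = 0"
      using IVT'[of "\<lambda>t. - g k t" 0 0 t1] pos[OF k] neg t1_pos by auto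
    then have "t \<in> Z" unfolding Z_def using k by force
    then have "t1 \<le> t" unfolding t1_def using bdd by (rule cInf_lower)
    then show False using t neg by simp
  qed
  obtain k1 where "k1 \<in> K" "g k1 t1 \<le> 0"
    using t1Z unfolding t1_def Z_def by auto
  then show ?thesis using t1_pos nonneg by force
qed

lemma sq_resid_eq_along_line:
  assumes "resid X Y \<beta> m + c * resid X Y \<beta> k = 0" and "(X$m + c *\<^sub>R X$k) \<bullet> d = 0"
    and "c\<^sup>2 = 1"
  shows "sq_resid X Y (\<beta> + t *\<^sub>R d) k = sq_resid X Y (\<beta> + t *\<^sub>R d) m"
proof -
  have "X$m \<bullet> d = - c * (X$k \<bullet> d)"
    using assms(2) unfolding inner_add_left inner_scaleR_left by linarith
  moreover have "resid X Y \<beta> m = - c * resid X Y \<beta> k"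
    using assms(1) by linarith
  ultimately have "resid X Y (\<beta> + t *\<^sub>R d) m = - c * resid X Y (\<beta> + t *\<^sub>R d) k"
    unfolding resid_along_line by (simp add: algebra_simps)
  then show ?thesis
    unfolding sq_resid_def using assms(3) by (simp add: power_mult_distrib)
qed

lemma sq_resid_tie_on_line:
  assumes "X$k \<bullet> d \<noteq> 0 \<or> X$m \<bullet> d \<noteq> 0"
  obtains t where "sq_resid X Y (\<beta> + t *\<^sub>R d) k = sq_resid X Y (\<beta> + t *\<^sub>R d) m"
proof (cases "X$k \<bullet> d = X$m \<bullet> d")
  case True
  with assms have "X$k \<bullet> d + X$m \<bullet> d \<noteq> 0" by auto
  define t where "t = (resid X Y \<beta> k + resid X Y \<beta> m) / (X$k \<bullet> d + X$m \<bullet> d)"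
  have "resid X Y (\<beta> + t *\<^sub>R d) k = - resid X Y (\<beta> + t *\<^sub>R d) m"
    unfolding resid_along_line t_def using \<open>X$k \<bullet> d + X$m \<bullet> d \<noteq> 0\<close> by (simp add: field_simps)
  then show thesis using that[of t] unfolding sq_resid_def by simp
next
  case False
  then have "X$k \<bullet> d - X$m \<bullet> d \<noteq> 0" by simp
  define t where "t = (resid X Y \<beta> k - resid X Y \<beta> m) / (X$k \<bullet> d - X$m \<bullet> d)"
  have "resid X Y (\<beta> + t *\<^sub>R d) k = resid X Y (\<beta> + t *\<^sub>R d) m"
    unfolding resid_along_line t_def using \<open>X$k \<bullet> d - X$m \<bullet> d \<noteq> 0\<close> by (simp add: field_simps)
  then show thesis using that[of t] unfolding sq_resid_def by simp
qed

section \<open>Border points of an optimal subset\<close>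

locale border_scan =
  fixes X :: "real^'p^'n::finite" and Y :: "real^'n" and h :: nat and A :: "'n set"
  assumes card_A: "card A = h" and h_pos: "0 < h" and h_less: "h < CARD('n)"
    and rows_nonzero: "\<And>i. X$i \<noteq> 0"
    and rows_full_rank: "\<And>d. (\<And>i. X$i \<bullet> d = 0) \<Longrightarrow> d = 0"
    and ord_sq_resid_pos: "\<And>\<beta>. ord_sq_resid X Y \<beta> h > 0"
begin

definition border :: "real^'p \<Rightarrow> bool" where
  "border \<beta> \<longleftrightarrow> lowest_set (sq_resid X Y \<beta>) h A \<and>
     (\<exists>a\<in>A. \<exists>b. b \<notin> A \<and> sq_resid X Y \<beta> a = sq_resid X Y \<beta> b)"

definition level_set :: "real^'p \<Rightarrow> 'n set" where
  "level_set \<beta> = {k. sq_resid X Y \<beta> k = ord_sq_resid X Y \<beta> h}"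

lemma sq_resid_pos_outside_lowest_set:
  assumes "lowest_set (sq_resid X Y \<beta>) h L" and "b \<notin> L"
  shows "sq_resid X Y \<beta> b > 0"
proof -
  have "L \<noteq> {}" using assms(1) h_pos unfolding lowest_set_def by auto
  then obtain a where "a \<in> L" by blast
  then have "ord_sq_resid X Y \<beta> h \<le> sq_resid X Y \<beta> b"
    using lowest_set_sorted_values_bounds(2)[OF assms(1) _ assms(2)]
    unfolding ord_sq_resid_eq_sorted_values by blast
  then show ?thesis using ord_sq_resid_pos[of \<beta>] by linarith
qed

lemma border_level:
  assumes "border \<beta>" and ab: "a \<in> A" "b \<notin> A" "sq_resid X Y \<beta> a = sq_resid X Y \<beta> b"
  shows "ord_sq_resid X Y \<beta> h = sq_resid X Y \<beta> a"
    and "ord_sq_resid X Y \<beta> (h + 1) = sq_resid X Y \<beta> a"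
proof -
  have "lowest_set (sq_resid X Y \<beta>) h A" using assms(1) unfolding border_def by blast
  note bounds = lowest_set_sorted_values_bounds[OF this ab(1,2)]
  show "ord_sq_resid X Y \<beta> h = sq_resid X Y \<beta> a"
    unfolding ord_sq_resid_eq_sorted_values using bounds(1,2) ab(3) by linarith
  show "ord_sq_resid X Y \<beta> (h + 1) = sq_resid X Y \<beta> a"
    unfolding ord_sq_resid_eq_sorted_values add_diff_cancel_right' using bounds(3,4) ab(3) by linarith
qed

lemma border_ties:
  assumes "border \<beta>"
  obtains a b where "a \<in> A" "b \<notin> A" "a \<in> level_set \<beta>" "b \<in> level_set \<beta>"
    and "ord_sq_resid X Y \<beta> (h + 1) = ord_sq_resid X Y \<beta> h"
proof -
  obtain a b where ab: "a \<in> A" "b \<notin> A" "sq_resid X Y \<beta> a = sq_resid X Y \<beta> b"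
    using assms unfolding border_def by blast
  note level = border_level[OF assms ab]
  show thesis by (rule that[OF ab(1,2)]) (use ab(3) level in \<open>auto simp: level_set_def\<close>)
qed

lemma border_separates:
  assumes "border \<beta>"
  shows "\<And>a. a \<in> A \<Longrightarrow> sq_resid X Y \<beta> a \<le> ord_sq_resid X Y \<beta> h"
    and "\<And>b. b \<notin> A \<Longrightarrow> ord_sq_resid X Y \<beta> h \<le> sq_resid X Y \<beta> b"
proof -
  obtain a0 b0 where "a0 \<in> A" "b0 \<notin> A" and low: "lowest_set (sq_resid X Y \<beta>) h A"
    using assms unfolding border_def by blast
  show "\<And>a. a \<in> A \<Longrightarrow> sq_resid X Y \<beta> a \<le> ord_sq_resid X Y \<beta> h"
    using lowest_set_sorted_values_bounds(1)[OF low _ \<open>b0 \<notin> A\<close>]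
    unfolding ord_sq_resid_eq_sorted_values by blast
  show "\<And>b. b \<notin> A \<Longrightarrow> ord_sq_resid X Y \<beta> h \<le> sq_resid X Y \<beta> b"
    using lowest_set_sorted_values_bounds(2)[OF low \<open>a0 \<in> A\<close>]
    unfolding ord_sq_resid_eq_sorted_values by blast
qed

text \<open>Move from a point where A is optimal towards one where it is not (a residual outside A
  made zero, which (A2) forbids for an optimal subset) and stop at the first tie across A.\<close>
lemma border_exists:
  assumes "lowest_set (sq_resid X Y \<beta>0) h A"
  obtains \<beta> where "border \<beta>"
proof (cases "\<exists>a\<in>A. \<exists>b. b \<notin> A \<and> sq_resid X Y \<beta>0 a = sq_resid X Y \<beta>0 b")
  case True
  then show thesis using that assms unfolding border_def by blast
next
  case False
  with assms have strict: "\<And>a b. a \<in> A \<Longrightarrow> b \<notin> A \<Longrightarrow> sq_resid X Y \<beta>0 a < sq_resid X Y \<beta>0 b"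
    unfolding lowest_set_def by force
  have "A \<noteq> UNIV" using card_A h_less by auto
  then obtain b0 where "b0 \<notin> A" by blast
  define \<beta>1 where "\<beta>1 = (Y$b0 / (X$b0 \<bullet> X$b0)) *\<^sub>R X$b0"
  have "sq_resid X Y \<beta>1 b0 = 0"
    using rows_nonzero[of b0] unfolding \<beta>1_def sq_resid_def resid_def by simp
  then have "\<not> lowest_set (sq_resid X Y \<beta>1) h A"
    using sq_resid_pos_outside_lowest_set \<open>b0 \<notin> A\<close> by force
  then obtain a1 b1 where ab1: "a1 \<in> A" "b1 \<notin> A" "sq_resid X Y \<beta>1 b1 < sq_resid X Y \<beta>1 a1"
    using card_A unfolding lowest_set_def by force
  define g where "g k t = sq_resid X Y (\<beta>0 + t *\<^sub>R (\<beta>1 - \<beta>0)) (snd k)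
                        - sq_resid X Y (\<beta>0 + t *\<^sub>R (\<beta>1 - \<beta>0)) (fst k)" for k t
  have "\<exists>t>0. (\<forall>k\<in>A \<times> - A. g k t \<ge> 0) \<and> (\<exists>k\<in>A \<times> - A. g k t = 0)"
  proof (rule first_zero_of_continuous_family[of _ _ "(a1, b1)" 1])
    show "continuous_on UNIV (g k)" for k
      unfolding g_def by (intro continuous_intros continuous_sq_resid_along_line)
  qed (use ab1 strict in \<open>auto simp: g_def\<close>)
  then obtain t where "\<forall>k\<in>A \<times> - A. g k t \<ge> 0" "\<exists>k\<in>A \<times> - A. g k t = 0" by blast
  then have "border (\<beta>0 + t *\<^sub>R (\<beta>1 - \<beta>0))"
    unfolding border_def lowest_set_def g_def using card_A by force
  then show thesis by (rule that)
qed

lemma border_extend_forward: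
  assumes "border \<beta>" and m: "m \<in> level_set \<beta>"
    and along: "\<And>k t. k \<in> level_set \<beta> \<Longrightarrow> sq_resid X Y (\<beta> + t *\<^sub>R d) k = sq_resid X Y (\<beta> + t *\<^sub>R d) m"
    and k0: "k0 \<notin> level_set \<beta>" "t0 > 0"
      "sq_resid X Y (\<beta> + t0 *\<^sub>R d) k0 = sq_resid X Y (\<beta> + t0 *\<^sub>R d) m"
  obtains \<beta>' where "border \<beta>'" "card (level_set \<beta>) < card (level_set \<beta>')"
proof -
  let ?G = "level_set \<beta>" and ?sq = "\<lambda>t. sq_resid X Y (\<beta> + t *\<^sub>R d)"
  define g where "g k t = (if k \<in> A then ?sq t m - ?sq t k else ?sq t k - ?sq t m)" for k t
  have sq0: "?sq 0 m = ord_sq_resid X Y \<beta> h" using m unfolding level_set_def by simp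
  have pos: "g k 0 > 0" if "k \<in> - ?G" for k
  proof (cases "k \<in> A")
    case True
    then have "sq_resid X Y \<beta> k < ord_sq_resid X Y \<beta> h"
      using border_separates(1)[OF assms(1)] that unfolding level_set_def by (auto simp: less_le)
    then show ?thesis using True sq0 by (simp add: g_def)
  next
    case False
    then have "ord_sq_resid X Y \<beta> h < sq_resid X Y \<beta> k"
      using border_separates(2)[OF assms(1)] that unfolding level_set_def by (auto simp: less_le)
    then show ?thesis using False sq0 by (simp add: g_def)
  qed
  have cont: "continuous_on UNIV (g k)" for k
    by (cases "k \<in> A") (simp_all add: g_def continuous_intros continuous_sq_resid_along_line)
  have "\<exists>t>0. (\<forall>k\<in>- ?G. g k t \<ge> 0) \<and> (\<exists>k\<in>- ?G. g k t = 0)"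
    by (rule first_zero_of_continuous_family[of _ _ k0 t0]) (use pos cont k0 in \<open>auto simp: g_def\<close>)
  then obtain t k1 where t: "\<forall>k\<in>- ?G. g k t \<ge> 0" and k1: "k1 \<notin> ?G" "g k1 t = 0"
    by blast
  let ?\<beta>' = "\<beta> + t *\<^sub>R d"
  have inside: "?sq t a \<le> ?sq t m" if "a \<in> A" for a
  proof (cases "a \<in> ?G")
    case False
    then have "g a t \<ge> 0" using t by blast
    then show ?thesis using that by (simp add: g_def)
  qed (use along in simp)
  have outside: "?sq t m \<le> ?sq t b" if "b \<notin> A" for b
  proof (cases "b \<in> ?G")
    case False
    then have "g b t \<ge> 0" using t by blast
    then show ?thesis using that by (simp add: g_def)
  qed (use along in simp)
  obtain a0 b0 where ab0: "a0 \<in> A" "b0 \<notin> A" "a0 \<in> ?G" "b0 \<in> ?G"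
    using border_ties[OF assms(1)] by blast
  have tie: "?sq t a0 = ?sq t m" "?sq t b0 = ?sq t m"
    using along ab0(3,4) by auto
  have "lowest_set (?sq t) h A"
    unfolding lowest_set_def using card_A inside outside by (blast intro: order_trans)
  moreover have "?sq t a0 = ?sq t b0" using tie by simp
  ultimately have border': "border ?\<beta>'"
    unfolding border_def using ab0(1,2) by blast
  have "ord_sq_resid X Y ?\<beta>' h = ?sq t m"
    using border_level(1)[OF border' ab0(1,2)] tie by simp
  then have "insert k1 ?G \<subseteq> level_set ?\<beta>'"
    using along k1(2) unfolding level_set_def g_def by (auto split: if_splits)
  then have "card (insert k1 ?G) \<le> card (level_set ?\<beta>')"
    by (intro card_mono) auto
  then have "card ?G < card (level_set ?\<beta>')"
    using k1(1) by simp
  then show thesis using that border' by blast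
qed

lemma border_extend:
  assumes "border \<beta>" and m: "m \<in> level_set \<beta>"
    and along: "\<And>k t. k \<in> level_set \<beta> \<Longrightarrow> sq_resid X Y (\<beta> + t *\<^sub>R d) k = sq_resid X Y (\<beta> + t *\<^sub>R d) m"
    and k0: "k0 \<notin> level_set \<beta>"
      "sq_resid X Y (\<beta> + t0 *\<^sub>R d) k0 = sq_resid X Y (\<beta> + t0 *\<^sub>R d) m"
  obtains \<beta>' where "border \<beta>'" "card (level_set \<beta>) < card (level_set \<beta>')"
proof (cases "t0 > 0")
  case True
  then show thesis using border_extend_forward[OF assms(1,2) along k0(1) True k0(2)] that by blast
next
  case False
  have "t0 \<noteq> 0" using k0 m unfolding level_set_def by auto
  with False have "- t0 > 0" by (simp add: less_le not_less)
  have "sq_resid X Y (\<beta> + t *\<^sub>R - d) k = sq_resid X Y (\<beta> + t *\<^sub>R - d) m"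
    if "k \<in> level_set \<beta>" for k t
    using along[OF that, of "- t"] by simp
  moreover have "sq_resid X Y (\<beta> + (- t0) *\<^sub>R - d) k0 = sq_resid X Y (\<beta> + (- t0) *\<^sub>R - d) m"
    using k0(2) by simp
  ultimately show thesis
    using border_extend_forward[OF assms(1,2) _ k0(1) \<open>- t0 > 0\<close>] that by blast
qed

text \<open>Any direction orthogonal to the signed pair sums of the level set keeps it tied; since X
  has full rank it eventually ties a further index, unless all residuals vanish together, which
  (A2) forbids.\<close>
lemma maximal_border_spans:
  assumes "border \<beta>"
    and maximal: "\<And>\<beta>'. border \<beta>' \<Longrightarrow> card (level_set \<beta>') \<le> card (level_set \<beta>)"
    and m: "m \<in> level_set \<beta>"
    and cancel: "\<And>k. k \<in> level_set \<beta> - {m} \<Longrightarrow> resid X Y \<beta> m + sgnb (s k) * resid X Y \<beta> k = 0"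
    and orth: "\<And>k. k \<in> level_set \<beta> - {m} \<Longrightarrow> (X$m + sgnb (s k) *\<^sub>R X$k) \<bullet> d = 0"
  shows "d = 0"
proof (rule ccontr)
  assume "d \<noteq> 0"
  let ?G = "level_set \<beta>" and ?sq = "\<lambda>t. sq_resid X Y (\<beta> + t *\<^sub>R d)"
  have sgnb_sq: "(sgnb b)\<^sup>2 = 1" for b unfolding sgnb_def by simp
  have along: "?sq t k = ?sq t m" if "k \<in> ?G" for k t
  proof (cases "k = m")
    case False
    then show ?thesis using cancel[of k] orth[of k] that sgnb_sq
      by (intro sq_resid_eq_along_line[where c = "sgnb (s k)"]) auto
  qed simp
  have "\<exists>k t. k \<notin> ?G \<and> ?sq t k = ?sq t m"
  proof (cases "X$m \<bullet> d = 0")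
    case True
    obtain i where i: "X$i \<bullet> d \<noteq> 0"
      using rows_full_rank \<open>d \<noteq> 0\<close> by blast
    have "i \<notin> ?G"
    proof
      assume "i \<in> ?G"
      then have "sgnb (s i) * (X$i \<bullet> d) = 0"
        using orth[of i] True i by (cases "i = m") (auto simp: inner_add_left)
      then show False using i by (simp add: sgnb_def split: if_splits)
    qed
    moreover obtain t where "?sq t i = ?sq t m"
      using sq_resid_tie_on_line[where k = i and m = m and d = d] i by blast
    ultimately show ?thesis by blast
  next
    case False
    have "?G \<noteq> UNIV"
    proof
      assume "?G = UNIV"
      define t where "t = resid X Y \<beta> m / (X$m \<bullet> d)"
      have "?sq t m = 0"
        using False unfolding t_def sq_resid_def resid_along_line by simp
      then have zero: "?sq t k = 0" for k using along[of k t] \<open>?G = UNIV\<close> by simp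
      obtain L where L: "lowest_set (?sq t) h L"
        using lowest_set_exists[OF less_imp_le[OF h_less]] by blast
      have "L \<noteq> UNIV" using L h_less unfolding lowest_set_def by auto
      then obtain b where "b \<notin> L" by blast
      then show False using sq_resid_pos_outside_lowest_set[OF L \<open>b \<notin> L\<close>] zero[of b] by simp
    qed
    then obtain k where "k \<notin> ?G" by blast
    moreover obtain t where "?sq t k = ?sq t m"
      using sq_resid_tie_on_line[where k = k and m = m and d = d] False by blast
    ultimately show ?thesis by blast
  qed
  then obtain k t where "k \<notin> ?G" "?sq t k = ?sq t m" by blast
  then obtain \<beta>' where "border \<beta>'" "card ?G < card (level_set \<beta>')"
    using border_extend[OF assms(1) m along] by blast
  then show False using maximal by fastforce
qed

end

section \<open>The candidates examined by the algorithm\<close>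

lemma rows_full_rank_if_h_full_rank:
  fixes X :: "real^'p^'n::finite"
  assumes "h \<le> CARD('n)" and h_full_rank: "\<forall>w \<in> Qnh h. invertible (transpose X ** diagm w ** X)"
    and orth: "\<And>i. X$i \<bullet> d = 0"
  shows "d = 0"
proof -
  obtain A :: "'n set" where "card A = h"
    using obtain_subset_with_card_n[OF assms(1)] by blast
  then have inv: "invertible (transpose X ** diagm (indicator_vec A) ** X)"
    using h_full_rank unfolding Qnh_eq_indicator_vecs by blast
  have "X *v d = 0" using orth by (simp add: vec_eq_iff matrix_vector_mul_component)
  then have "(transpose X ** diagm (indicator_vec A) ** X) *v d = 0"
    by (simp flip: matrix_vector_mul_assoc)
  then show ?thesis
    using injD[OF inj_matrix_vector_mult[OF inv], of d 0] by simp
qed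

lemma invertible_if_span_rows:
  fixes M :: "real^'p^'p"
  assumes "span (rows M) = UNIV"
  shows "invertible M"
  using assms by (simp add: invertible_left_inverse matrix_left_invertible_span_rows)

lemma BSA_candidatesI:
  fixes X :: "real^'p^'n::{finite,linorder}"
  assumes "w \<in> Qnh h" and "relZ h X Y \<beta> w"
    and level: "(resid X Y \<beta> m)\<^sup>2 = ord_sq_resid X Y \<beta> h"
      "ord_sq_resid X Y \<beta> h = ord_sq_resid X Y \<beta> (h + 1)"
    and above: "\<And>k. k \<in> V \<Longrightarrow> m < k"
    and cancel: "\<And>k. k \<in> V \<Longrightarrow> resid X Y \<beta> m + sgnb (s k) * resid X Y \<beta> k = 0"
    and span: "span ((\<lambda>k. X$m + sgnb (s k) *\<^sub>R X$k) ` V) = UNIV"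
  shows "w \<in> BSA_candidates h X Y"
proof -
  define N where "N k = X$m + sgnb (s k) *\<^sub>R X$k" for k
  obtain B where B: "B \<subseteq> N ` V" "independent B" "N ` V \<subseteq> span B" "card B = dim (N ` V)"
    by (rule basis_exists)
  have "span (N ` V) \<subseteq> span B"
    using span_mono[OF B(3)] by (simp add: span_span)
  then have span_B: "span B = UNIV"
    using span unfolding N_def by auto
  have "dim (N ` V) = CARD('p)"
    using dim_span[of "N ` V"] span unfolding N_def by simp
  obtain U where U: "U \<subseteq> V" "inj_on N U" "B = N ` U"
    using B(1) unfolding subset_image_inj by blast
  then have card_U: "card U = CARD('p)"
    using B(4) \<open>dim (N ` V) = CARD('p)\<close> by (simp add: card_image)
  then obtain e where e: "bij_betw e (UNIV :: 'p set) U"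
    using finite_same_card_bij[of "UNIV :: 'p set" U] by auto
  define S where "S = insert m U"
  have "m \<notin> U" using U(1) above by blast
  then have card_S: "card S = CARD('p) + 1"
    unfolding S_def using card_U by simp
  have Min_S: "Min S = m"
    unfolding S_def using U(1) above by (intro Min_eqI) (auto intro: less_imp_le)
  have S_U: "S - {Min S} = U"
    using \<open>m \<notin> U\<close> Min_S unfolding S_def by simp
  have eV: "e j \<in> V" for j using e U(1) unfolding bij_betw_def by auto
  define M :: "real^'p^'p" where "M = (\<chi> j. X$(Min S) + sgnb (s (e j)) *\<^sub>R X$(e j))"
  define b :: "real^'p" where "b = (\<chi> j. Y$(Min S) + sgnb (s (e j)) * Y$(e j))"
  have "row j M = N (e j)" for j
    unfolding row_def M_def N_def Min_S by simp
  then have "rows M = N ` e ` UNIV"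
    unfolding rows_def by auto
  then have "rows M = B" using e U(3) unfolding bij_betw_def by simp
  then have inv: "invertible M" using span_B by (intro invertible_if_span_rows) simp
  have "M$j \<bullet> \<beta> = b$j" for j
    using cancel[OF eV[of j]] unfolding M_def b_def Min_S resid_def
    by (simp add: inner_add_left algebra_simps)
  then have "M *v \<beta> = b" by (simp add: vec_eq_iff matrix_vector_mul_component)
  then have "matrix_inv M *v b = (matrix_inv M ** M) *v \<beta>"
    by (simp flip: matrix_vector_mul_assoc)
  then have solves: "matrix_inv M *v b = \<beta>"
    by (simp add: matrix_inv_mult_left[OF inv])
  show ?thesis
    unfolding BSA_candidates_def Let_def
  proof (intro CollectI conjI exI[of _ S] exI[of _ e] exI[of _ "\<lambda>j. s (e j)"])
    show "invertible (\<chi> j. X$(Min S) + sgnb (s (e j)) *\<^sub>R X$(e j))"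
      using inv unfolding M_def .
    show "(resid X Y (matrix_inv (\<chi> j. X$(Min S) + sgnb (s (e j)) *\<^sub>R X$(e j))
            *v (\<chi> j. Y$(Min S) + sgnb (s (e j)) * Y$(e j))) (Min S))\<^sup>2 =
          ord_sq_resid X Y (matrix_inv (\<chi> j. X$(Min S) + sgnb (s (e j)) *\<^sub>R X$(e j))
            *v (\<chi> j. Y$(Min S) + sgnb (s (e j)) * Y$(e j))) h"
      using solves level(1) unfolding M_def b_def Min_S by simp
  qed (use assms(1,2) level(2) card_S e S_U solves in \<open>simp_all add: M_def b_def\<close>)
qed

lemma Jw_minimizer_in_BSA_candidates:
  fixes X :: "real^'p^'n::{finite,linorder}"
  assumes "0 < h" "h < CARD('n)" "\<forall>i. X$i \<noteq> 0" "\<forall>\<beta>. ord_sq_resid X Y \<beta> h > 0"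
    and h_full_rank: "\<forall>w \<in> Qnh h. invertible (transpose X ** diagm w ** X)"
    and w: "w \<in> Qnh h" and minimal: "\<And>w'. w' \<in> Qnh h \<Longrightarrow> Jw X Y w \<le> Jw X Y w'"
  shows "w \<in> BSA_candidates h X Y"
proof -
  obtain A where A: "card A = h" "w = indicator_vec A"
    using w unfolding Qnh_eq_indicator_vecs by blast
  interpret border_scan X Y h A
    using assms A(1) rows_full_rank_if_h_full_rank[OF less_imp_le[OF assms(2)] h_full_rank]
    by unfold_locales auto
  have "lowest_set (sq_resid X Y (beta_w X Y w)) h A"
    using minimal unfolding A(2) by (rule lowest_set_at_Jw_minimizer[OF h_full_rank A(1)])
  then obtain \<beta>0 where "border \<beta>0" by (rule border_exists)
  moreover have "\<forall>\<beta>. border \<beta> \<longrightarrow> card (level_set \<beta>) < CARD('n) + 1"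
    by (simp add: less_Suc_eq_le card_le_card_UNIV)
  ultimately obtain \<beta> where \<beta>: "border \<beta>"
    and maximal: "\<And>\<beta>'. border \<beta>' \<Longrightarrow> card (level_set \<beta>') \<le> card (level_set \<beta>)"
    using ex_has_greatest_nat[of border \<beta>0 "\<lambda>\<beta>. card (level_set \<beta>)"] by blast
  obtain a0 where "a0 \<in> level_set \<beta>"
    and level_next: "ord_sq_resid X Y \<beta> (h + 1) = ord_sq_resid X Y \<beta> h"
    using border_ties[OF \<beta>] by blast
  define m where "m = Min (level_set \<beta>)"
  have m: "m \<in> level_set \<beta>"
    unfolding m_def using \<open>a0 \<in> level_set \<beta>\<close> by (intro Min_in) auto
  have above: "m < k" if "k \<in> level_set \<beta> - {m}" for k
    using that Min_le[of "level_set \<beta>" k] unfolding m_def by (auto intro: le_neq_trans)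
  define s where "s k \<longleftrightarrow> resid X Y \<beta> k = - resid X Y \<beta> m" for k
  have cancel: "resid X Y \<beta> m + sgnb (s k) * resid X Y \<beta> k = 0" if "k \<in> level_set \<beta> - {m}" for k
  proof -
    have "(resid X Y \<beta> k)\<^sup>2 = (resid X Y \<beta> m)\<^sup>2"
      using that m unfolding level_set_def sq_resid_def by simp
    then have "resid X Y \<beta> k = resid X Y \<beta> m \<or> resid X Y \<beta> k = - resid X Y \<beta> m"
      by (simp add: power2_eq_iff)
    then show ?thesis unfolding s_def sgnb_def by auto
  qed
  have "span ((\<lambda>k. X$m + sgnb (s k) *\<^sub>R X$k) ` (level_set \<beta> - {m})) = UNIV"
  proof (rule ccontr)
    assume "span ((\<lambda>k. X$m + sgnb (s k) *\<^sub>R X$k) ` (level_set \<beta> - {m})) \<noteq> UNIV"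
    then obtain d where d: "d \<noteq> 0"
      "\<forall>x \<in> span ((\<lambda>k. X$m + sgnb (s k) *\<^sub>R X$k) ` (level_set \<beta> - {m})). d \<bullet> x = 0"
      using span_not_UNIV_orthogonal by blast
    have "(X$m + sgnb (s k) *\<^sub>R X$k) \<bullet> d = 0" if "k \<in> level_set \<beta> - {m}" for k
      using d(2) that by (metis (no_types, lifting) image_eqI inner_commute span_base)
    then show False using maximal_border_spans[OF \<beta> maximal m cancel] d(1) by blast
  qed
  moreover have "OF h X Y \<beta> = weighted_rss X Y w \<beta>"
    using \<beta> unfolding border_def A(2) by (simp add: OF_lowest_set weighted_rss_indicator_vec)
  then have "relZ h X Y \<beta> w" unfolding relZ_def weighted_rss_def .
  moreover have "(resid X Y \<beta> m)\<^sup>2 = ord_sq_resid X Y \<beta> h"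
    using m unfolding level_set_def sq_resid_def by simp
  ultimately show ?thesis
    using BSA_candidatesI[OF w _ _ level_next[symmetric] above cancel] by blast
qed

theorem theorem2:
  fixes X :: "real^'p^('n::{finite,linorder})" and Y :: "real^('n::{finite,linorder})" and h :: nat
  assumes np: "CARD('p) < CARD('n)"
    and hp: "CARD('p) \<le> h" and hn: "h < CARD('n)"
    and A1: "\<forall>i j. i \<noteq> j \<longrightarrow> X$i \<noteq> X$j \<and> X$i \<noteq> - X$j"
    and A1': "\<forall>i. X$i \<noteq> 0"
    and A2: "\<forall>\<beta>. ord_sq_resid X Y \<beta> h > 0"
    and A3: "\<forall>s :: 'n \<Rightarrow> bool.
               dim {X$(Min UNIV) + sgnb (s j) *\<^sub>R X$j | j. j \<noteq> Min UNIV} = CARD('p)"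
    and A4: "\<forall>w \<in> Qnh h. invertible (transpose X ** diagm w ** X)"
  shows "BSA_candidates h X Y \<noteq> {} \<and>
         (\<forall>w \<in> BSA_candidates h X Y.
            (\<forall>w' \<in> BSA_candidates h X Y. Jw X Y w \<le> Jw X Y w') \<longrightarrow>
            (\<forall>\<beta>. OF h X Y (beta_w X Y w) \<le> OF h X Y \<beta>))"
proof -
  have "0 < CARD('p)" by simp
  then have "0 < h" using hp by linarith
  obtain w0 where w0: "w0 \<in> Qnh h" "\<And>w'. w' \<in> Qnh h \<Longrightarrow> Jw X Y w0 \<le> Jw X Y w'"
    using Jw_minimizer_exists[OF less_imp_le[OF hn]] by blast
  have cand: "w0 \<in> BSA_candidates h X Y"
    using Jw_minimizer_in_BSA_candidates[OF \<open>0 < h\<close> hn A1' A2 A4 w0] .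
  have "OF h X Y (beta_w X Y w) \<le> OF h X Y \<beta>"
    if w: "w \<in> BSA_candidates h X Y" and minimal: "\<forall>w'\<in>BSA_candidates h X Y. Jw X Y w \<le> Jw X Y w'"
    for w \<beta>
  proof -
    have "w \<in> Qnh h" using w unfolding BSA_candidates_def by simp
    obtain w' where w': "w' \<in> Qnh h" "Jw X Y w' \<le> OF h X Y \<beta>"
      using Jw_le_OF[OF less_imp_le[OF hn] A4] by blast
    have "OF h X Y (beta_w X Y w) \<le> weighted_rss X Y w (beta_w X Y w)"
      using OF_le_weighted_rss[OF \<open>w \<in> Qnh h\<close>] .
    also have "\<dots> = Jw X Y w"
      using \<open>w \<in> Qnh h\<close> by (simp add: Jw_eq_weighted_rss Qnh_def)
    also have "\<dots> \<le> Jw X Y w0" using minimal cand by blast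
    also have "\<dots> \<le> OF h X Y \<beta>" using w0(2)[OF w'(1)] w'(2) by linarith
    finally show ?thesis .
  qed
  then show ?thesis using cand by blast
qed

end
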